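(* Let $n\ge 2$, $k\ge 0$ and $\nu_1,\ldots,\nu_n>0$. The set of polynomials \[ \psi_{j_1,\ldots,j_{n-1}} = CK_{n}\Big( \big(K_+^{[n-1]}\big)^{j_{n-1}} CK_{n-1}\Big( \cdots \big(K_+^{[3]}\big)^{j_3} CK_{3}\Big( \big(K_+^{[2]}\big)^{j_2} CK_{2}\big( x_1^{j_1}\big)\Big)\cdots\Big)\Big), \] where $(j_1,\ldots,j_{n-1})$ ranges over all tuples of nonnegative integers with $\sum_{\ell=1}^{n-1} j_\ell = k$, is a basis of $\mathcal{H}_k(\mathbb{R}^n)$.
   Context: For $m\ge 1$, $\mathcal{P}_k(\mathbb{R}^m)$ denotes the space of real homogeneous polynomials of degree $k$ in $x_1,\ldots,x_m$. For $m\le n$, $K_+^{[m]}=\sum_{j=1}^m (x_j^2\partial_{x_j}+2\nu_j x_j)$ and $K_-^{[m]}=\sum_{j=1}^m\partial_{x_j}$, acting on polynomials in $x_1,\ldots,x_m$. $\mathcal{H}_k(\mathbb{R}^n)=\mathcal{P}_k(\mathbb{R}^n)\cap\ker K_-^{[n]}$. For $2\le m\le n$, $CK_m$ is the map sending a polynomial $p(x_1,\ldots,x_{m-1})$ to $p(x_1-x_m,\ldots,x_{m-1}-x_m)$. *)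

theory Defs
  imports Complex_Main "HOL-Library.Poly_Mapping"
begin

text \<open>Real polynomials in the variables x_1, x_2, ... : finitely supported maps from
  exponent vectors (variable index i :: nat mapped to its exponent) to real coefficients.
  Variable x_i has index i (1-based).\<close>
type_synonym rpoly = "(nat \<Rightarrow>\<^sub>0 nat) \<Rightarrow>\<^sub>0 real"

definition pvar :: "nat \<Rightarrow> rpoly" where
  "pvar i = Poly_Mapping.single (Poly_Mapping.single i 1) 1"

definition pconst :: "real \<Rightarrow> rpoly" where
  "pconst c = Poly_Mapping.single 0 c"

definition pscale :: "real \<Rightarrow> rpoly \<Rightarrow> rpoly" where
  "pscale c p = Poly_Mapping.map (\<lambda>a. c * a) p"

definition mdeg :: "(nat \<Rightarrow>\<^sub>0 nat) \<Rightarrow> nat" where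
  "mdeg a = (\<Sum>i\<in>Poly_Mapping.keys a. Poly_Mapping.lookup a i)"

definition pderiv_var :: "nat \<Rightarrow> rpoly \<Rightarrow> rpoly" where
  "pderiv_var j p = (\<Sum>a\<in>Poly_Mapping.keys p.
      Poly_Mapping.single (Poly_Mapping.update j (Poly_Mapping.lookup a j - 1) a)
        (of_nat (Poly_Mapping.lookup a j) * Poly_Mapping.lookup p a))"

definition psubst :: "(nat \<Rightarrow> rpoly) \<Rightarrow> rpoly \<Rightarrow> rpoly" where
  "psubst \<sigma> p = (\<Sum>a\<in>Poly_Mapping.keys p. pconst (Poly_Mapping.lookup p a) * (\<Prod>i\<in>Poly_Mapping.keys a. (\<sigma> i) ^ (Poly_Mapping.lookup a i)))"

definition hom_polys :: "nat \<Rightarrow> nat \<Rightarrow> rpoly set" where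
  "hom_polys m k = {p. \<forall>a\<in>Poly_Mapping.keys p. Poly_Mapping.keys a \<subseteq> {1..m} \<and> mdeg a = k}"

definition Kplus :: "(nat \<Rightarrow> real) \<Rightarrow> nat \<Rightarrow> rpoly \<Rightarrow> rpoly" where
  "Kplus \<nu> m p = (\<Sum>j=1..m. pvar j ^ 2 * pderiv_var j p + pconst (2 * \<nu> j) * pvar j * p)"

definition Kminus :: "nat \<Rightarrow> rpoly \<Rightarrow> rpoly" where
  "Kminus m p = (\<Sum>j=1..m. pderiv_var j p)"

definition harm :: "nat \<Rightarrow> nat \<Rightarrow> rpoly set" where
  "harm n k = {p \<in> hom_polys n k. Kminus n p = 0}"

definition CK :: "nat \<Rightarrow> rpoly \<Rightarrow> rpoly" where
  "CK m p = psubst (\<lambda>i. if 1 \<le> i \<and> i \<le> m - 1 then pvar i - pvar m else pvar i) p"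

text \<open>For js = [j_1,...,j_{n-1}]:
  stage js 0 = x_1^{j_1},
  stage js r = (K_+^{[r+1]})^{j_{r+1}} (CK_{r+1} (stage js (r-1))) for r \<ge> 1.\<close>
fun stage :: "(nat \<Rightarrow> real) \<Rightarrow> nat list \<Rightarrow> nat \<Rightarrow> rpoly" where
  "stage \<nu> js 0 = pvar 1 ^ (js ! 0)"
| "stage \<nu> js (Suc r) = (Kplus \<nu> (r + 2) ^^ (js ! (r + 1))) (CK (r + 2) (stage \<nu> js r))"

definition psi :: "(nat \<Rightarrow> real) \<Rightarrow> nat \<Rightarrow> nat list \<Rightarrow> rpoly" where
  "psi \<nu> n js = CK n (stage \<nu> js (n - 2))"

end

theory Submission
  imports Defs
begin

text \<open>
  CK_{m+1} is a linear isomorphism from P_d(R^m) onto H_d(R^{m+1}), inverted by the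
  substitution x_{m+1} := 0: the differences x_i - x_{m+1} are killed by K_-, and a
  polynomial in the kernel of K_- that vanishes on x_{m+1} = 0 is zero (look at one of its
  monomials of least degree in x_{m+1}). On P_d(R^m) the commutator of K_- and K_+ is
  multiplication by 2(d + nu_1 + ... + nu_m), which gives the Fischer decomposition
  P_k(R^m) = (+)_j (K_+)^j H_{k-j}(R^m) for positive nu. Alternating the two facts, induction
  on m shows that the intermediate polynomials (K_+^{[m]})^{j_m} CK_m( ... CK_2(x_1^{j_1}) ... ),
  indexed by the tuples (j_1, ..., j_m) with sum k, form a basis of P_k(R^m); applying CK_n to
  this basis for m = n - 1 yields the claimed basis of H_k(R^n).
\<close>

abbreviation (input) lookup :: "('a \<Rightarrow>\<^sub>0 'b::zero) \<Rightarrow> 'a \<Rightarrow> 'b" where "lookup \<equiv> Poly_Mapping.lookup"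
abbreviation (input) keys :: "('a \<Rightarrow>\<^sub>0 'b::zero) \<Rightarrow> 'a set" where "keys \<equiv> Poly_Mapping.keys"
abbreviation (input) single :: "'a \<Rightarrow> 'b \<Rightarrow> ('a \<Rightarrow>\<^sub>0 'b::zero)" where "single \<equiv> Poly_Mapping.single"
abbreviation (input) update :: "'a \<Rightarrow> 'b \<Rightarrow> ('a \<Rightarrow>\<^sub>0 'b::zero) \<Rightarrow> ('a \<Rightarrow>\<^sub>0 'b)" where "update \<equiv> Poly_Mapping.update"

lemma pscale_eq_pconst_mult: "pscale c p = pconst c * p"
  by (simp add: pscale_def pconst_def mult_map_scale_conv_mult)

lemma pconst_0 [simp]: "pconst 0 = 0"
  by (simp add: pconst_def)

lemma pconst_1 [simp]: "pconst 1 = 1"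
  by (simp add: pconst_def)

lemma pconst_add: "pconst (a + b) = pconst a + pconst b"
  by (simp add: pconst_def single_add)

lemma pconst_diff: "pconst (a - b) = pconst a - pconst b"
  by (simp add: pconst_def single_diff)

lemma pconst_mult: "pconst (a * b) = pconst a * pconst b"
  by (simp add: pconst_def mult_single)

lemma pconst_numeral: "pconst (numeral n) = numeral n"
  by (simp add: pconst_def)

lemma pconst_of_nat: "pconst (of_nat n) = of_nat n"
  by (simp add: pconst_def)

lemma pconst_sum: "pconst (sum f I) = (\<Sum>i\<in>I. pconst (f i))"
  by (induction I rule: infinite_finite_induct) (simp_all add: pconst_add)

lemma lookup_pconst_mult: "lookup (pconst c * p) a = c * lookup p a"
  by (simp add: pconst_def flip: mult_map_scale_conv_mult) (simp add: map.rep_eq when_def)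

lemma keys_pconst_mult_subset: "keys (pconst c * p) \<subseteq> keys p"
  by (auto simp: in_keys_iff lookup_pconst_mult)

lemma pconst_eq_0_iff [simp]: "pconst c = 0 \<longleftrightarrow> c = 0"
  by (metis lookup_single_eq lookup_zero pconst_0 pconst_def)

lemma pconst_mult_single: "pconst c * single a d = single a (c * d)"
  by (simp add: pconst_def mult_single)

lemma sum_single_lookup_superset:
  assumes "finite S" "keys p \<subseteq> S"
  shows "(\<Sum>a\<in>S. single a (lookup p a)) = p"
proof (rule poly_mapping_eqI)
  fix k
  have "lookup (\<Sum>a\<in>S. single a (lookup p a)) k = (\<Sum>a\<in>S. if a = k then lookup p k else 0)"
    by (simp add: lookup_sum lookup_single when_def eq_commute cong: if_cong)
  also have "\<dots> = lookup p k"
    using assms by (auto simp: in_keys_iff)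
  finally show "lookup (\<Sum>a\<in>S. single a (lookup p a)) k = lookup p k" .
qed

lemma sum_single_lookup: "(\<Sum>a\<in>keys p. single a (lookup p a)) = p"
  by (rule sum_single_lookup_superset) auto

lemma mult_eq_sum_single:
  "p * q = (\<Sum>a\<in>keys p. \<Sum>b\<in>keys q. single (a + b) (lookup p a * lookup q b))"
proof -
  have "p * q = (\<Sum>a\<in>keys p. single a (lookup p a)) * (\<Sum>b\<in>keys q. single b (lookup q b))"
    by (simp only: sum_single_lookup)
  then show ?thesis
    by (simp add: sum_product mult_single)
qed

lemma pvar_power: "pvar i ^ n = single (single i n) 1"
  by (induction n) (simp_all add: pvar_def mult_single flip: single_add)

section \<open>Substitution\<close>

definition pmonom :: "(nat \<Rightarrow> rpoly) \<Rightarrow> (nat \<Rightarrow>\<^sub>0 nat) \<Rightarrow> rpoly" where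
  "pmonom \<sigma> a = (\<Prod>i\<in>keys a. \<sigma> i ^ lookup a i)"

lemma pmonom_superset:
  assumes "finite S" "keys a \<subseteq> S"
  shows "pmonom \<sigma> a = (\<Prod>i\<in>S. \<sigma> i ^ lookup a i)"
  unfolding pmonom_def using assms
  by (intro prod.mono_neutral_left) (auto simp: in_keys_iff)

lemma keys_add_nat: "keys (a + b) = keys a \<union> keys (b :: nat \<Rightarrow>\<^sub>0 nat)"
  by (auto simp: in_keys_iff lookup_add)

lemma pmonom_0 [simp]: "pmonom \<sigma> 0 = 1"
  by (simp add: pmonom_def)

lemma pmonom_add: "pmonom \<sigma> (a + b) = pmonom \<sigma> a * pmonom \<sigma> b"
proof -
  let ?S = "keys a \<union> keys b"
  have "pmonom \<sigma> (a + b) = (\<Prod>i\<in>?S. \<sigma> i ^ lookup a i * \<sigma> i ^ lookup b i)"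
    by (subst pmonom_superset[where S = ?S]) (auto simp: keys_add_nat lookup_add power_add)
  also have "\<dots> = pmonom \<sigma> a * pmonom \<sigma> b"
    by (simp add: prod.distrib pmonom_superset[where S = ?S])
  finally show ?thesis .
qed

lemma pmonom_single: "pmonom \<sigma> (single i n) = \<sigma> i ^ n"
  by (cases "n = 0") (simp_all add: pmonom_def)

lemma update_eq_add_single: "i \<notin> keys f \<Longrightarrow> update i v f = f + single i v"
  by (rule poly_mapping_eqI) (auto simp: lookup_update lookup_add lookup_single when_def in_keys_iff)

lemma pmonom_pvar: "pmonom pvar a = single a 1"
proof (induction a rule: update_induct)
  case (update f a b)
  then show ?case
    by (simp add: update_eq_add_single pmonom_add pmonom_single pvar_power mult_single)
qed simp

lemma psubst_eq_sum_pmonom: "psubst \<sigma> p = (\<Sum>a\<in>keys p. pconst (lookup p a) * pmonom \<sigma> a)"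
  by (simp add: psubst_def pmonom_def)

lemma psubst_eq_sum_pmonom_superset:
  assumes "finite S" "keys p \<subseteq> S"
  shows "psubst \<sigma> p = (\<Sum>a\<in>S. pconst (lookup p a) * pmonom \<sigma> a)"
  unfolding psubst_eq_sum_pmonom using assms
  by (intro sum.mono_neutral_left) (auto simp: in_keys_iff)

lemma psubst_add: "psubst \<sigma> (p + q) = psubst \<sigma> p + psubst \<sigma> q"
proof -
  let ?S = "keys p \<union> keys q"
  have "psubst \<sigma> (p + q) = (\<Sum>a\<in>?S. pconst (lookup p a + lookup q a) * pmonom \<sigma> a)"
    by (subst psubst_eq_sum_pmonom_superset[where S = ?S]) (auto dest: subsetD[OF keys_add] simp: lookup_add)
  also have "\<dots> = psubst \<sigma> p + psubst \<sigma> q"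
    by (simp add: pconst_add distrib_right sum.distrib psubst_eq_sum_pmonom_superset[where S = ?S])
  finally show ?thesis .
qed

interpretation psubst: additive "psubst \<sigma>" for \<sigma>
  by standard (rule psubst_add)

lemma psubst_single: "psubst \<sigma> (single a c) = pconst c * pmonom \<sigma> a"
  by (subst psubst_eq_sum_pmonom_superset[where S = "{a}"]) auto

lemma psubst_pconst_mult: "psubst \<sigma> (pconst c * p) = pconst c * psubst \<sigma> p"
  by (subst psubst_eq_sum_pmonom_superset[where S = "keys p"])
     (auto simp: keys_pconst_mult_subset psubst_eq_sum_pmonom lookup_pconst_mult pconst_mult
       sum_distrib_left mult.assoc)

lemma psubst_mult: "psubst \<sigma> (p * q) = psubst \<sigma> p * psubst \<sigma> q"
proof -
  have "psubst \<sigma> (p * q) = (\<Sum>a\<in>keys p. \<Sum>b\<in>keys q.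
          (pconst (lookup p a) * pmonom \<sigma> a) * (pconst (lookup q b) * pmonom \<sigma> b))"
    by (subst mult_eq_sum_single) (simp add: psubst.sum psubst_single pconst_mult pmonom_add algebra_simps)
  also have "\<dots> = psubst \<sigma> p * psubst \<sigma> q"
    by (simp add: psubst_eq_sum_pmonom sum_product)
  finally show ?thesis .
qed

lemma psubst_pconst [simp]: "psubst \<sigma> (pconst c) = pconst c"
  using psubst_single[of \<sigma> 0 c] by (simp add: pconst_def)

lemma psubst_pvar [simp]: "psubst \<sigma> (pvar i) = \<sigma> i"
  using psubst_single[of \<sigma> "single i 1" 1] by (simp add: pvar_def pmonom_single)

lemma psubst_power: "psubst \<sigma> (p ^ n) = psubst \<sigma> p ^ n"
  by (induction n) (simp_all add: psubst_mult flip: pconst_1)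

lemma psubst_prod: "psubst \<sigma> (\<Prod>i\<in>I. f i) = (\<Prod>i\<in>I. psubst \<sigma> (f i))"
  by (induction I rule: infinite_finite_induct) (simp_all add: psubst_mult flip: pconst_1)

lemma psubst_pmonom: "psubst \<tau> (pmonom \<sigma> a) = pmonom (\<lambda>i. psubst \<tau> (\<sigma> i)) a"
  by (simp add: pmonom_def psubst_prod psubst_power)

lemma psubst_psubst: "psubst \<tau> (psubst \<sigma> p) = psubst (\<lambda>i. psubst \<tau> (\<sigma> i)) p"
  by (simp add: psubst_eq_sum_pmonom[of \<sigma>] psubst_eq_sum_pmonom[of "\<lambda>i. psubst \<tau> (\<sigma> i)"]
      psubst.sum psubst_pconst_mult psubst_pmonom)

lemma psubst_cong:
  assumes "\<And>a i. a \<in> keys p \<Longrightarrow> i \<in> keys a \<Longrightarrow> \<sigma> i = \<sigma>' i"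
  shows "psubst \<sigma> p = psubst \<sigma>' p"
  unfolding psubst_def using assms by (intro sum.cong refl arg_cong2[where f = "(*)"] prod.cong) auto

lemma psubst_pvar_id [simp]: "psubst pvar p = p"
  by (simp add: psubst_eq_sum_pmonom pmonom_pvar pconst_mult_single sum_single_lookup)

section \<open>Partial derivatives\<close>

abbreviation dec_exp :: "nat \<Rightarrow> (nat \<Rightarrow>\<^sub>0 nat) \<Rightarrow> (nat \<Rightarrow>\<^sub>0 nat)" where
  "dec_exp j a \<equiv> update j (lookup a j - 1) a"

lemma dec_exp_add_single:
  assumes "1 \<le> lookup a j"
  shows "dec_exp j a + single j 1 = a"
  using assms by (intro poly_mapping_eqI) (auto simp: lookup_add lookup_update lookup_single when_def)

lemma dec_exp_add:
  assumes "1 \<le> lookup a j"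
  shows "dec_exp j (a + b) = dec_exp j a + b"
  using assms by (intro poly_mapping_eqI) (auto simp: lookup_update lookup_add)

lemma pderiv_var_superset:
  assumes "finite S" "keys p \<subseteq> S"
  shows "pderiv_var j p = (\<Sum>a\<in>S. single (dec_exp j a) (of_nat (lookup a j) * lookup p a))"
  unfolding pderiv_var_def using assms
  by (intro sum.mono_neutral_left) (auto simp: in_keys_iff)

lemma pderiv_var_add: "pderiv_var j (p + q) = pderiv_var j p + pderiv_var j q"
proof -
  let ?S = "keys p \<union> keys q"
  have "pderiv_var j (p + q)
      = (\<Sum>a\<in>?S. single (dec_exp j a) (of_nat (lookup a j) * (lookup p a + lookup q a)))"
    by (subst pderiv_var_superset[where S = ?S]) (auto dest: subsetD[OF keys_add] simp: lookup_add)
  also have "\<dots> = pderiv_var j p + pderiv_var j q"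
    by (simp add: distrib_left single_add sum.distrib pderiv_var_superset[where S = ?S])
  finally show ?thesis .
qed

interpretation pderiv_var: additive "pderiv_var j" for j
  by standard (rule pderiv_var_add)

lemma pderiv_var_single:
  "pderiv_var j (single a c) = single (dec_exp j a) (of_nat (lookup a j) * c)"
  by (subst pderiv_var_superset[where S = "{a}"]) auto

lemma pderiv_var_pconst_mult: "pderiv_var j (pconst c * p) = pconst c * pderiv_var j p"
  by (subst pderiv_var_superset[where S = "keys p"])
     (simp_all add: keys_pconst_mult_subset lookup_pconst_mult pderiv_var_def sum_distrib_left
       pconst_mult_single mult.left_commute)

lemma pderiv_var_single_mult:
  "pderiv_var j (single a c * single b d)
   = pderiv_var j (single a c) * single b d + single a c * pderiv_var j (single b d)"
proof -
  consider "lookup a j = 0" "lookup b j = 0" | "1 \<le> lookup a j" "lookup b j = 0"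
    | "lookup a j = 0" "1 \<le> lookup b j" | "1 \<le> lookup a j" "1 \<le> lookup b j"
    by linarith
  then show ?thesis
  proof cases
    case 1
    then show ?thesis by (simp add: mult_single pderiv_var_single lookup_add)
  next
    case 2
    then show ?thesis
      using dec_exp_add[of a j b] by (simp add: mult_single pderiv_var_single lookup_add mult.assoc)
  next
    case 3
    then show ?thesis
      using dec_exp_add[of b j a] by (simp add: mult_single pderiv_var_single lookup_add add.commute mult_ac)
  next
    case 4
    let ?X = "update j (lookup a j + lookup b j - 1) (a + b)"
    have "dec_exp j a + b = ?X" "a + dec_exp j b = ?X"
      using 4 dec_exp_add[of a j b] dec_exp_add[of b j a] by (simp_all add: lookup_add add.commute)
    then have "pderiv_var j (single a c) * single b d + single a c * pderiv_var j (single b d)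
       = single ?X (of_nat (lookup a j) * c * d) + single ?X (c * (of_nat (lookup b j) * d))"
      by (simp only: pderiv_var_single mult_single)
    also have "\<dots> = pderiv_var j (single a c * single b d)"
      by (simp add: mult_single pderiv_var_single lookup_add algebra_simps flip: single_add)
    finally show ?thesis by simp
  qed
qed

lemma pderiv_var_mult: "pderiv_var j (p * q) = pderiv_var j p * q + p * pderiv_var j q"
proof -
  let ?p = "\<Sum>a\<in>keys p. single a (lookup p a)" and ?q = "\<Sum>b\<in>keys q. single b (lookup q b)"
  have "pderiv_var j (?p * ?q) = pderiv_var j ?p * ?q + ?p * pderiv_var j ?q"
    by (simp add: sum_product pderiv_var.sum pderiv_var_single_mult sum.distrib)
  then show ?thesis
    by (simp only: sum_single_lookup)
qed

lemma pderiv_var_pvar: "pderiv_var j (pvar i) = (if i = j then 1 else 0)"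
proof -
  have "update i 0 (single i (1::nat)) = 0"
    by (rule poly_mapping_eqI) (simp add: lookup_update lookup_single when_def)
  then show ?thesis
    by (auto simp: pvar_def pderiv_var_single lookup_single when_def)
qed

lemma pderiv_var_pconst [simp]: "pderiv_var j (pconst c) = 0"
  by (simp add: pconst_def pderiv_var_single)

lemma pderiv_var_commute_single:
  "pderiv_var i (pderiv_var j (single a c)) = pderiv_var j (pderiv_var i (single a c))"
proof (cases "i = j")
  case False
  then have "update i (lookup a i - 1) (dec_exp j a) = update j (lookup a j - 1) (dec_exp i a)"
    by (intro poly_mapping_eqI) (auto simp: lookup_update)
  with False show ?thesis
    by (simp add: pderiv_var_single lookup_update algebra_simps)
qed simp

lemma pderiv_var_commute: "pderiv_var i (pderiv_var j p) = pderiv_var j (pderiv_var i p)"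
proof -
  have "pderiv_var i (pderiv_var j (\<Sum>a\<in>keys p. single a (lookup p a)))
      = pderiv_var j (pderiv_var i (\<Sum>a\<in>keys p. single a (lookup p a)))"
    by (simp add: pderiv_var.sum pderiv_var_commute_single)
  then show ?thesis
    by (simp only: sum_single_lookup)
qed

lemma lookup_pderiv_var:
  "lookup (pderiv_var j p) b = (of_nat (lookup b j) + 1) * lookup p (b + single j 1)"
proof -
  have "(of_nat (lookup a j) * lookup p a when dec_exp j a = b)
      = (if a = b + single j 1 then (of_nat (lookup b j) + 1) * lookup p a else 0)" for a
  proof (cases "lookup a j = 0")
    case True
    then show ?thesis by (auto simp: lookup_add)
  next
    case False
    then have "dec_exp j a = b \<longleftrightarrow> a = b + single j 1"
      by (auto intro!: poly_mapping_eqI simp: lookup_add lookup_update lookup_single when_def)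
    with False show ?thesis by (auto simp: lookup_add)
  qed
  then have "lookup (pderiv_var j p) b
      = (\<Sum>a\<in>keys p. if a = b + single j 1 then (of_nat (lookup b j) + 1) * lookup p a else 0)"
    by (simp add: pderiv_var_def lookup_sum lookup_single)
  also have "\<dots> = (of_nat (lookup b j) + 1) * lookup p (b + single j 1)"
    by (auto simp: in_keys_iff)
  finally show ?thesis .
qed

section \<open>Homogeneous polynomials\<close>

lemma mdeg_superset:
  assumes "finite S" "keys a \<subseteq> S"
  shows "mdeg a = (\<Sum>i\<in>S. lookup a i)"
  unfolding mdeg_def using assms
  by (intro sum.mono_neutral_left) (auto simp: in_keys_iff)

lemma mdeg_add: "mdeg (a + b) = mdeg a + mdeg b"
proof -
  let ?S = "keys a \<union> keys b"
  have "mdeg (a + b) = (\<Sum>i\<in>?S. lookup a i + lookup b i)"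
    by (subst mdeg_superset[where S = ?S]) (auto simp: keys_add_nat lookup_add)
  also have "\<dots> = mdeg a + mdeg b"
    by (simp add: sum.distrib mdeg_superset[where S = ?S])
  finally show ?thesis .
qed

lemma mdeg_single [simp]: "mdeg (single i n) = n"
  by (cases "n = 0") (auto simp: mdeg_def)

lemma lookup_le_mdeg: "lookup a j \<le> mdeg a"
  by (cases "j \<in> keys a") (auto simp: mdeg_def in_keys_iff intro: member_le_sum)

lemma mdeg_dec_exp:
  assumes "1 \<le> lookup a j"
  shows "mdeg (dec_exp j a) = mdeg a - 1"
  using mdeg_add[of "dec_exp j a" "single j 1"] dec_exp_add_single[OF assms] by simp

lemma keys_dec_exp_subset: "keys (dec_exp j a) \<subseteq> keys a"
  by (auto simp: in_keys_iff lookup_update split: if_splits)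

lemma hom_polysI:
  "(\<And>a. a \<in> keys p \<Longrightarrow> keys a \<subseteq> {1..m} \<and> mdeg a = d) \<Longrightarrow> p \<in> hom_polys m d"
  by (auto simp: hom_polys_def)

lemma hom_polysD:
  assumes "p \<in> hom_polys m d" "a \<in> keys p"
  shows "keys a \<subseteq> {1..m}" "mdeg a = d"
  using assms by (auto simp: hom_polys_def)

lemma hom_polys_0 [simp]: "0 \<in> hom_polys m d"
  by (simp add: hom_polys_def)

lemma hom_polys_single: "keys a \<subseteq> {1..m} \<Longrightarrow> mdeg a = d \<Longrightarrow> single a c \<in> hom_polys m d"
  by (auto simp: hom_polys_def)

lemma hom_polys_add: "p \<in> hom_polys m d \<Longrightarrow> q \<in> hom_polys m d \<Longrightarrow> p + q \<in> hom_polys m d"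
  by (auto simp: hom_polys_def dest: subsetD[OF keys_add])

lemma hom_polys_uminus: "p \<in> hom_polys m d \<Longrightarrow> - p \<in> hom_polys m d"
  by (simp add: hom_polys_def)

lemma hom_polys_diff: "p \<in> hom_polys m d \<Longrightarrow> q \<in> hom_polys m d \<Longrightarrow> p - q \<in> hom_polys m d"
  using hom_polys_add[of p m d "- q"] hom_polys_uminus[of q m d] by simp

lemma hom_polys_sum: "(\<And>i. i \<in> I \<Longrightarrow> f i \<in> hom_polys m d) \<Longrightarrow> sum f I \<in> hom_polys m d"
  by (induction I rule: infinite_finite_induct) (auto intro: hom_polys_add)

lemma hom_polys_pconst_mult: "p \<in> hom_polys m d \<Longrightarrow> pconst c * p \<in> hom_polys m d"
  by (auto simp: hom_polys_def dest: subsetD[OF keys_pconst_mult_subset])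

lemma hom_polys_mult:
  assumes "p \<in> hom_polys m d1" "q \<in> hom_polys m d2"
  shows "p * q \<in> hom_polys m (d1 + d2)"
proof (rule hom_polysI)
  fix c assume "c \<in> keys (p * q)"
  then obtain a b where "c = a + b" "a \<in> keys p" "b \<in> keys q"
    using keys_mult by blast
  then show "keys c \<subseteq> {1..m} \<and> mdeg c = d1 + d2"
    using hom_polysD[OF assms(1)] hom_polysD[OF assms(2)] by (auto simp: keys_add_nat mdeg_add)
qed

lemma hom_polys_1: "1 \<in> hom_polys m 0"
  by (simp add: hom_polys_def mdeg_def)

lemma hom_polys_pvar: "1 \<le> i \<Longrightarrow> i \<le> m \<Longrightarrow> pvar i \<in> hom_polys m 1"
  by (auto simp: pvar_def hom_polys_def)

lemma hom_polys_power: "p \<in> hom_polys m d \<Longrightarrow> p ^ n \<in> hom_polys m (n * d)"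
  by (induction n) (simp_all add: hom_polys_1 hom_polys_mult)

lemma hom_polys_prod:
  "(\<And>i. i \<in> I \<Longrightarrow> f i \<in> hom_polys m (g i)) \<Longrightarrow> prod f I \<in> hom_polys m (sum g I)"
  by (induction I rule: infinite_finite_induct) (simp_all add: hom_polys_1 hom_polys_mult)

lemma hom_polys_pderiv_var:
  assumes "p \<in> hom_polys m d"
  shows "pderiv_var j p \<in> hom_polys m (d - 1)"
  unfolding pderiv_var_def
proof (rule hom_polys_sum)
  fix a assume a: "a \<in> keys p"
  show "single (dec_exp j a) (of_nat (lookup a j) * lookup p a) \<in> hom_polys m (d - 1)"
  proof (cases "lookup a j = 0")
    case False
    then show ?thesis
      using hom_polysD[OF assms a] mdeg_dec_exp[where a = a and j = j] keys_dec_exp_subset[of j a]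
      by (intro hom_polys_single) auto
  qed simp
qed

lemma pderiv_var_hom_polys_0:
  assumes "p \<in> hom_polys m 0"
  shows "pderiv_var j p = 0"
proof -
  have "lookup a j = 0" if "a \<in> keys p" for a
    using hom_polysD(2)[OF assms that] lookup_le_mdeg[of a j] by simp
  then show ?thesis
    by (simp add: pderiv_var_def)
qed

lemma hom_polys_psubst:
  assumes "\<And>i. 1 \<le> i \<Longrightarrow> i \<le> m \<Longrightarrow> \<sigma> i \<in> hom_polys m' 1" "p \<in> hom_polys m d"
  shows "psubst \<sigma> p \<in> hom_polys m' d"
  unfolding psubst_eq_sum_pmonom
proof (intro hom_polys_sum hom_polys_pconst_mult)
  fix a assume a: "a \<in> keys p"
  have "pmonom \<sigma> a \<in> hom_polys m' (\<Sum>i\<in>keys a. lookup a i * 1)"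
    unfolding pmonom_def using hom_polysD(1)[OF assms(2) a]
    by (intro hom_polys_prod hom_polys_power assms(1)) auto
  then show "pmonom \<sigma> a \<in> hom_polys m' d"
    using hom_polysD(2)[OF assms(2) a] by (simp add: mdeg_def)
qed

lemma hom_polys_Suc_0_eq:
  assumes "p \<in> hom_polys (Suc 0) k"
  shows "p = pconst (lookup p (single 1 k)) * pvar 1 ^ k"
proof -
  have "keys p \<subseteq> {single 1 k}"
  proof
    fix a assume a: "a \<in> keys p"
    have "keys a \<subseteq> {1}" "lookup a 1 = k"
      using hom_polysD[OF assms a] mdeg_superset[of "{1}" a] by auto
    then have "a = single 1 k"
      by (intro poly_mapping_eqI) (auto simp: lookup_single when_def in_keys_iff)
    then show "a \<in> {single 1 k}" by simp
  qed
  then have "p = (\<Sum>a\<in>{single 1 k}. single a (lookup p a))"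
    by (intro sum_single_lookup_superset[symmetric]) auto
  then show ?thesis
    by (simp add: pvar_power pconst_mult_single)
qed

lemma single_sum: "single a (sum f I) = (\<Sum>i\<in>I. single a (f i))"
  by (induction I rule: infinite_finite_induct) (simp_all add: single_add)

lemma euler_single:
  assumes "keys a \<subseteq> {1..m}"
  shows "(\<Sum>j=1..m. pvar j * pderiv_var j (single a c)) = single a (of_nat (mdeg a) * c)"
proof -
  have "pvar j * pderiv_var j (single a c) = single a (of_nat (lookup a j) * c)" for j
  proof (cases "lookup a j = 0")
    case False
    then have "single j 1 + dec_exp j a = a"
      using dec_exp_add_single[where a = a and j = j] by (simp add: add.commute)
    then show ?thesis
      by (simp add: pderiv_var_single pvar_def mult_single)
  qed (simp add: pderiv_var_single)
  then have "(\<Sum>j=1..m. pvar j * pderiv_var j (single a c)) = single a ((\<Sum>j=1..m. of_nat (lookup a j)) * c)"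
    by (simp add: sum_distrib_right flip: single_sum)
  also have "(\<Sum>j=1..m. of_nat (lookup a j)) = (of_nat (mdeg a) :: real)"
    using assms by (simp add: mdeg_superset[where S = "{1..m}"])
  finally show ?thesis .
qed

lemma euler:
  assumes "p \<in> hom_polys m d"
  shows "(\<Sum>j=1..m. pvar j * pderiv_var j p) = pconst (of_nat d) * p"
proof -
  have "(\<Sum>j=1..m. pvar j * pderiv_var j (\<Sum>a\<in>keys p. single a (lookup p a)))
      = (\<Sum>a\<in>keys p. \<Sum>j=1..m. pvar j * pderiv_var j (single a (lookup p a)))"
    unfolding pderiv_var.sum sum_distrib_left by (rule sum.swap)
  also have "\<dots> = (\<Sum>a\<in>keys p. pconst (of_nat d) * single a (lookup p a))"
    using euler_single[OF hom_polysD(1)[OF assms]] hom_polysD(2)[OF assms]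
    by (intro sum.cong refl) (simp add: pconst_mult_single)
  finally show ?thesis
    by (simp add: sum_single_lookup flip: sum_distrib_left)
qed

section \<open>The operators K_+ and K_-\<close>

lemma Kplus_add: "Kplus \<nu> m (p + q) = Kplus \<nu> m p + Kplus \<nu> m q"
  by (simp add: Kplus_def pderiv_var_add algebra_simps flip: sum.distrib)

interpretation Kplus: additive "Kplus \<nu> m" for \<nu> m
  by standard (rule Kplus_add)

lemma Kplus_pconst_mult: "Kplus \<nu> m (pconst c * p) = pconst c * Kplus \<nu> m p"
  by (simp add: Kplus_def pderiv_var_pconst_mult sum_distrib_left) (simp add: algebra_simps)

lemma Kplus_pow_add: "(Kplus \<nu> m ^^ j) (p + q) = (Kplus \<nu> m ^^ j) p + (Kplus \<nu> m ^^ j) q"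
  by (induction j) (simp_all add: Kplus_add)

interpretation Kplus_pow: additive "Kplus \<nu> m ^^ j" for \<nu> m j
  by standard (rule Kplus_pow_add)

lemma Kplus_pow_pconst_mult: "(Kplus \<nu> m ^^ j) (pconst c * p) = pconst c * (Kplus \<nu> m ^^ j) p"
  by (induction j) (simp_all add: Kplus_pconst_mult)

lemma Kminus_add: "Kminus m (p + q) = Kminus m p + Kminus m q"
  by (simp add: Kminus_def pderiv_var_add sum.distrib)

interpretation Kminus: additive "Kminus m" for m
  by standard (rule Kminus_add)

lemma Kminus_pconst_mult: "Kminus m (pconst c * p) = pconst c * Kminus m p"
  by (simp add: Kminus_def pderiv_var_pconst_mult sum_distrib_left)

lemma Kminus_mult: "Kminus m (p * q) = Kminus m p * q + p * Kminus m q"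
  by (simp add: Kminus_def pderiv_var_mult sum.distrib sum_distrib_left sum_distrib_right)

lemma Kminus_1 [simp]: "Kminus m 1 = 0"
  by (simp add: Kminus_def flip: pconst_1)

lemma Kminus_prod_power_eq_0:
  "(\<And>i. i \<in> I \<Longrightarrow> Kminus m (f i) = 0) \<Longrightarrow> Kminus m (\<Prod>i\<in>I. f i ^ n i) = 0"
proof (induction I rule: infinite_finite_induct)
  case (insert i I)
  have "Kminus m (f i ^ k) = 0" for k
    using insert.prems by (induction k) (simp_all add: Kminus_mult)
  with insert show ?case
    by (simp add: Kminus_mult)
qed simp_all

lemma hom_polys_Kplus:
  assumes "p \<in> hom_polys m d"
  shows "Kplus \<nu> m p \<in> hom_polys m (Suc d)"
  unfolding Kplus_def
proof (intro hom_polys_sum hom_polys_add)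
  fix j assume j: "j \<in> {1..m}"
  show "pvar j ^ 2 * pderiv_var j p \<in> hom_polys m (Suc d)"
  proof (cases "d = 0")
    case True
    then show ?thesis using pderiv_var_hom_polys_0 assms by simp
  next
    case False
    have "pvar j ^ 2 * pderiv_var j p \<in> hom_polys m (2 * 1 + (d - 1))"
      using j by (intro hom_polys_mult hom_polys_power hom_polys_pvar hom_polys_pderiv_var assms) auto
    with False show ?thesis by (simp add: numeral_2_eq_2)
  qed
  have "pconst (2 * \<nu> j) * (pvar j * p) \<in> hom_polys m (1 + d)"
    using j by (intro hom_polys_pconst_mult hom_polys_mult hom_polys_pvar assms) auto
  then show "pconst (2 * \<nu> j) * pvar j * p \<in> hom_polys m (Suc d)"
    by (simp add: mult.assoc)
qed

lemma hom_polys_Kplus_pow: "p \<in> hom_polys m d \<Longrightarrow> (Kplus \<nu> m ^^ j) p \<in> hom_polys m (d + j)"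
  by (induction j) (simp_all add: hom_polys_Kplus)

lemma hom_polys_Kminus: "p \<in> hom_polys m d \<Longrightarrow> Kminus m p \<in> hom_polys m (d - 1)"
  unfolding Kminus_def by (intro hom_polys_sum hom_polys_pderiv_var)

lemma pderiv_var_Kplus_summand:
  "pderiv_var i (pvar j ^ 2 * pderiv_var j p + pconst c * pvar j * p)
   = (pvar j ^ 2 * pderiv_var j (pderiv_var i p) + pconst c * pvar j * pderiv_var i p)
     + (if i = j then 2 * pvar j * pderiv_var j p + pconst c * p else 0)"
  by (simp add: pderiv_var_add pderiv_var_mult pderiv_var_pconst_mult power2_eq_square
      pderiv_var_pvar pderiv_var_commute[of i j] algebra_simps)

lemma Kminus_Kplus_commutator:
  assumes "p \<in> hom_polys m d"
  shows "Kminus m (Kplus \<nu> m p)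
    = Kplus \<nu> m (Kminus m p) + pconst (2 * (of_nat d + (\<Sum>j=1..m. \<nu> j))) * p"
proof -
  let ?KP = "\<lambda>j q. pvar j ^ 2 * pderiv_var j q + pconst (2 * \<nu> j) * pvar j * q"
  let ?R = "\<lambda>i j. if i = j then 2 * pvar j * pderiv_var j p + pconst (2 * \<nu> j) * p else 0"
  have "Kminus m (Kplus \<nu> m p) = (\<Sum>i=1..m. \<Sum>j=1..m. pderiv_var i (?KP j p))"
    by (simp add: Kminus_def Kplus_def pderiv_var.sum)
  also have "\<dots> = (\<Sum>i=1..m. \<Sum>j=1..m. ?KP j (pderiv_var i p) + ?R i j)"
    by (simp only: pderiv_var_Kplus_summand)
  also have "\<dots> = (\<Sum>i=1..m. Kplus \<nu> m (pderiv_var i p)) + (\<Sum>i=1..m. \<Sum>j=1..m. ?R i j)"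
    by (simp only: sum.distrib Kplus_def)
  also have "(\<Sum>i=1..m. Kplus \<nu> m (pderiv_var i p)) = Kplus \<nu> m (Kminus m p)"
    by (simp add: Kminus_def Kplus.sum)
  also have "(\<Sum>i=1..m. \<Sum>j=1..m. ?R i j)
      = 2 * (\<Sum>i=1..m. pvar i * pderiv_var i p) + pconst (2 * (\<Sum>j=1..m. \<nu> j)) * p"
    by (simp add: sum.delta sum.distrib sum_distrib_left sum_distrib_right pconst_sum mult.assoc
        pconst_mult pconst_numeral)
  also have "\<dots> = pconst (2 * (of_nat d + (\<Sum>j=1..m. \<nu> j))) * p"
    unfolding euler[OF assms]
    by (simp add: pconst_mult pconst_add pconst_numeral pconst_of_nat algebra_simps)
  finally show ?thesis .
qed

section \<open>Fischer decomposition\<close>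

lemma harm_0 [simp]: "0 \<in> harm m d"
  by (simp add: harm_def Kminus.zero)

lemma harm_add: "h \<in> harm m d \<Longrightarrow> g \<in> harm m d \<Longrightarrow> h + g \<in> harm m d"
  by (simp add: harm_def hom_polys_add Kminus_add)

lemma harm_pconst_mult: "h \<in> harm m d \<Longrightarrow> pconst c * h \<in> harm m d"
  by (simp add: harm_def hom_polys_pconst_mult Kminus_pconst_mult)

lemma harm_sum: "(\<And>i. i \<in> I \<Longrightarrow> f i \<in> harm m d) \<Longrightarrow> sum f I \<in> harm m d"
  by (induction I rule: infinite_finite_induct) (auto intro: harm_add)

text \<open>Pushing K_- through (K_+)^j h with h in H_e(R^m), the commutator formula contributes
  2(e + i + nu_1 + ... + nu_m) as it passes the (i+1)-st factor.\<close>
definition lowering_coeff :: "(nat \<Rightarrow> real) \<Rightarrow> nat \<Rightarrow> nat \<Rightarrow> nat \<Rightarrow> real" where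
  "lowering_coeff \<nu> m e j = (\<Sum>i<j. 2 * (real e + real i + (\<Sum>l=1..m. \<nu> l)))"

lemma lowering_coeff_0 [simp]: "lowering_coeff \<nu> m e 0 = 0"
  by (simp add: lowering_coeff_def)

lemma lowering_coeff_pos:
  assumes "(\<Sum>l=1..m. \<nu> l) > 0" "j > 0"
  shows "lowering_coeff \<nu> m e j > 0"
  unfolding lowering_coeff_def using assms
  by (intro sum_pos) (auto simp: lessThan_empty_iff intro!: add_nonneg_pos)

lemma Kminus_Kplus_pow_harm:
  assumes "h \<in> harm m e"
  shows "Kminus m ((Kplus \<nu> m ^^ j) h) = pconst (lowering_coeff \<nu> m e j) * (Kplus \<nu> m ^^ (j - 1)) h"
proof (induction j)
  case 0
  with assms show ?case by (simp add: harm_def lowering_coeff_def)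
next
  case (Suc j)
  have hom: "(Kplus \<nu> m ^^ j) h \<in> hom_polys m (e + j)"
    using assms by (intro hom_polys_Kplus_pow) (simp add: harm_def)
  have "Kplus \<nu> m (pconst (lowering_coeff \<nu> m e j) * (Kplus \<nu> m ^^ (j - 1)) h)
      = pconst (lowering_coeff \<nu> m e j) * (Kplus \<nu> m ^^ j) h"
    by (cases j) (simp_all add: Kplus_pconst_mult lowering_coeff_def Kplus.zero)
  then show ?case
    by (simp add: Kminus_Kplus_commutator[OF hom] Suc.IH lowering_coeff_def pconst_add
        distrib_right)
qed

lemma fischer_unique:
  assumes pos: "(\<Sum>l=1..m. \<nu> l) > 0"
    and "\<And>j. j \<le> J \<Longrightarrow> h j \<in> harm m (e j)" "(\<Sum>j\<le>J. (Kplus \<nu> m ^^ j) (h j)) = 0"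
  shows "\<forall>j\<le>J. h j = 0"
  using assms(2,3)
proof (induction J arbitrary: h e)
  case (Suc J)
  let ?c = "\<lambda>i. lowering_coeff \<nu> m (e (Suc i)) (Suc i)"
  have "0 = Kminus m (\<Sum>j\<le>Suc J. (Kplus \<nu> m ^^ j) (h j))"
    using Suc.prems(2) by (simp add: Kminus.zero)
  also have "\<dots> = (\<Sum>j\<le>Suc J. pconst (lowering_coeff \<nu> m (e j) j) * (Kplus \<nu> m ^^ (j - 1)) (h j))"
    unfolding Kminus.sum by (intro sum.cong refl Kminus_Kplus_pow_harm Suc.prems(1)) simp
  also have "\<dots> = (\<Sum>i\<le>J. (Kplus \<nu> m ^^ i) (pconst (?c i) * h (Suc i)))"
    by (simp only: sum.atMost_Suc_shift) (simp add: Kplus_pow_pconst_mult)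
  finally have "\<forall>i\<le>J. pconst (?c i) * h (Suc i) = 0"
    using Suc.prems(1) by (intro Suc.IH[where e = "\<lambda>i. e (Suc i)"]) (simp_all add: harm_pconst_mult)
  then have h_Suc: "\<forall>i\<le>J. h (Suc i) = 0"
    using lowering_coeff_pos[OF pos] by (metis mult_eq_0_iff pconst_eq_0_iff less_irrefl zero_less_Suc)
  moreover have "(\<Sum>j\<le>Suc J. (Kplus \<nu> m ^^ j) (h j)) = h 0 + (\<Sum>i\<le>J. (Kplus \<nu> m ^^ Suc i) (h (Suc i)))"
    by (simp only: sum.atMost_Suc_shift) simp
  ultimately have "h 0 = 0"
    using Suc.prems(2) by (simp add: Kplus_pow.zero Kplus.zero)
  with h_Suc show ?case
    by (metis Suc_le_mono not0_implies_Suc)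
qed simp

lemma fischer_exists:
  assumes pos: "(\<Sum>l=1..m. \<nu> l) > 0"
    and "p \<in> hom_polys m k"
  shows "\<exists>h. (\<forall>j\<le>k. h j \<in> harm m (k - j)) \<and> p = (\<Sum>j\<le>k. (Kplus \<nu> m ^^ j) (h j))"
  using assms(2)
proof (induction k arbitrary: p)
  case 0
  then show ?case
    by (intro exI[of _ "\<lambda>_. p"]) (simp add: harm_def Kminus_def pderiv_var_hom_polys_0)
next
  case (Suc k)
  have "Kminus m p \<in> hom_polys m k"
    using hom_polys_Kminus[OF Suc.prems] by simp
  then obtain g where g: "\<And>j. j \<le> k \<Longrightarrow> g j \<in> harm m (k - j)"
    and Kminus_p: "Kminus m p = (\<Sum>j\<le>k. (Kplus \<nu> m ^^ j) (g j))"
    using Suc.IH by blast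
  \<comment> \<open>Lift each summand through K_-; then p - r lies in the kernel of K_-.\<close>
  define c where "c j = 1 / lowering_coeff \<nu> m (k - j) (Suc j)" for j
  define r where "r = (\<Sum>j\<le>k. (Kplus \<nu> m ^^ Suc j) (pconst (c j) * g j))"
  have c: "lowering_coeff \<nu> m (k - j) (Suc j) * c j = 1" for j
    unfolding c_def using lowering_coeff_pos[OF pos, of "Suc j" "k - j"] by simp
  have "Kminus m r = (\<Sum>j\<le>k. pconst (lowering_coeff \<nu> m (k - j) (Suc j)) * (Kplus \<nu> m ^^ j) (pconst (c j) * g j))"
    unfolding r_def Kminus.sum
    by (intro sum.cong refl, subst Kminus_Kplus_pow_harm[where e = "k - _"]) (auto intro: harm_pconst_mult g)
  also have "\<dots> = Kminus m p"
    by (simp add: Kminus_p Kplus_pow_pconst_mult c flip: mult.assoc pconst_mult)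
  finally have Kminus_r: "Kminus m r = Kminus m p" .
  have "(Kplus \<nu> m ^^ Suc j) (pconst (c j) * g j) \<in> hom_polys m (k - j + Suc j)" if "j \<le> k" for j
    using g[OF that] by (intro hom_polys_Kplus_pow hom_polys_pconst_mult) (simp add: harm_def)
  then have "r \<in> hom_polys m (Suc k)"
    unfolding r_def by (intro hom_polys_sum) simp
  with Suc.prems Kminus_r have "p - r \<in> harm m (Suc k)"
    by (simp add: harm_def hom_polys_diff Kminus.diff)
  define h where "h j = (if j = 0 then p - r else pconst (c (j - 1)) * g (j - 1))" for j
  have "h j \<in> harm m (Suc k - j)" if "j \<le> Suc k" for j
    using that \<open>p - r \<in> harm m (Suc k)\<close> g by (cases j) (simp_all add: h_def harm_pconst_mult)
  moreover have "p = (\<Sum>j\<le>Suc k. (Kplus \<nu> m ^^ j) (h j))"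
    by (simp only: sum.atMost_Suc_shift) (simp add: h_def r_def)
  ultimately show ?case
    by blast
qed

section \<open>The map CK and its inverse\<close>

definition ck_var :: "nat \<Rightarrow> nat \<Rightarrow> rpoly" where
  "ck_var m i = (if 1 \<le> i \<and> i \<le> m then pvar i - pvar (Suc m) else pvar i)"

lemma CK_Suc: "CK (Suc m) = psubst (ck_var m)"
  by (intro ext) (simp add: CK_def ck_var_def[abs_def])

definition zero_var :: "nat \<Rightarrow> rpoly \<Rightarrow> rpoly" where
  "zero_var j = psubst (\<lambda>i. if i = j then 0 else pvar i)"

lemma hom_polys_CK:
  assumes "p \<in> hom_polys m d"
  shows "CK (Suc m) p \<in> hom_polys (Suc m) d"
  unfolding CK_Suc
  by (rule hom_polys_psubst[OF _ assms])
    (auto simp: ck_var_def intro!: hom_polys_diff hom_polys_pvar[unfolded One_nat_def])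

lemma Kminus_ck_var:
  assumes "1 \<le> i" "i \<le> m"
  shows "Kminus (Suc m) (ck_var m i) = 0"
  using assms by (simp add: ck_var_def Kminus_def pderiv_var.diff pderiv_var_pvar sum_subtractf)

lemma Kminus_CK:
  assumes "p \<in> hom_polys m d"
  shows "Kminus (Suc m) (CK (Suc m) p) = 0"
proof -
  have "Kminus (Suc m) (pmonom (ck_var m) a) = 0" if "a \<in> keys p" for a
    unfolding pmonom_def using hom_polysD(1)[OF assms that]
    by (intro Kminus_prod_power_eq_0 Kminus_ck_var) auto
  then show ?thesis
    unfolding CK_Suc psubst_eq_sum_pmonom by (simp add: Kminus.sum Kminus_pconst_mult)
qed

lemma CK_harm: "p \<in> hom_polys m d \<Longrightarrow> CK (Suc m) p \<in> harm (Suc m) d"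
  by (simp add: harm_def hom_polys_CK Kminus_CK)

lemma zero_var_CK:
  assumes "p \<in> hom_polys m d"
  shows "zero_var (Suc m) (CK (Suc m) p) = p"
proof -
  have "zero_var (Suc m) (CK (Suc m) p) = psubst (\<lambda>i. zero_var (Suc m) (ck_var m i)) p"
    unfolding CK_Suc zero_var_def by (rule psubst_psubst)
  also have "\<dots> = psubst pvar p"
  proof (rule psubst_cong)
    fix a i assume "a \<in> keys p" "i \<in> keys a"
    then have "1 \<le> i" "i \<le> m"
      using hom_polysD(1)[OF assms] by fastforce+
    then show "zero_var (Suc m) (ck_var m i) = pvar i"
      by (simp add: zero_var_def ck_var_def psubst.diff)
  qed
  finally show ?thesis by simp
qed

lemma hom_polys_zero_var:
  "p \<in> hom_polys (Suc m) d \<Longrightarrow> zero_var (Suc m) p \<in> hom_polys m d"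
  unfolding zero_var_def by (rule hom_polys_psubst) (auto intro: hom_polys_pvar[unfolded One_nat_def])

lemma lookup_zero_var:
  assumes "lookup a j = 0"
  shows "lookup (zero_var j p) a = lookup p a"
proof -
  let ?\<sigma> = "\<lambda>i. if i = j then 0 else pvar i"
  have pmonom_eq: "pmonom ?\<sigma> b = (if j \<in> keys b then 0 else single b 1)" for b
  proof (cases "j \<in> keys b")
    case True
    then show ?thesis
      by (auto simp: pmonom_def in_keys_iff zero_power intro!: prod_zero bexI[of _ j])
  next
    case False
    then have "pmonom ?\<sigma> b = pmonom pvar b"
      unfolding pmonom_def by (intro prod.cong) auto
    with False show ?thesis by (simp add: pmonom_pvar)
  qed
  have "lookup (zero_var j p) a = (\<Sum>b\<in>keys p. lookup (pconst (lookup p b) * pmonom ?\<sigma> b) a)"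
    by (simp add: zero_var_def psubst_eq_sum_pmonom lookup_sum)
  also have "\<dots> = (\<Sum>b\<in>keys p. if b = a then lookup p a else 0)"
    using assms
    by (intro sum.cong refl) (auto simp: pmonom_eq lookup_pconst_mult lookup_single when_def in_keys_iff)
  also have "\<dots> = lookup p a"
    by (auto simp: in_keys_iff)
  finally show ?thesis .
qed

text \<open>If g \<noteq> 0, let a be a monomial of g of least degree i0 in x_j; i0 > 0 because g
  vanishes on x_j = 0. The coefficient of a - e_j in K_- g then comes from a alone, since every
  other candidate a - e_j + e_l (l \<noteq> j) has degree i0 - 1 in x_j.\<close>
lemma Kminus_zero_var_eq_0_imp_eq_0:
  assumes j: "j \<in> {1..m}" and K: "Kminus m g = 0" and Z: "zero_var j g = 0"
  shows "g = 0"
proof (rule ccontr)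
  assume "g \<noteq> 0"
  define i0 where "i0 = Min ((\<lambda>a. lookup a j) ` keys g)"
  have "i0 \<in> (\<lambda>a. lookup a j) ` keys g"
    unfolding i0_def using \<open>g \<noteq> 0\<close> by (intro Min_in) auto
  then obtain a where a: "a \<in> keys g" "lookup a j = i0"
    by auto
  have minimal: "i0 \<le> lookup a' j" if "a' \<in> keys g" for a'
    unfolding i0_def using that by (intro Min_le) auto
  have "i0 \<noteq> 0"
    using a Z lookup_zero_var[of a j g] by (auto simp: in_keys_iff)
  define b where "b = dec_exp j a"
  have b: "b + single j 1 = a" "lookup b j = i0 - 1"
    unfolding b_def using dec_exp_add_single[where a = a and j = j] a \<open>i0 \<noteq> 0\<close>
    by (simp_all add: lookup_update)
  have "lookup g (b + single l 1) = 0" if "l \<in> {1..m} - {j}" for l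
  proof -
    have "lookup (b + single l 1) j = i0 - 1"
      using that b(2) by (simp add: lookup_add lookup_single)
    then have "b + single l 1 \<notin> keys g"
      using minimal \<open>i0 \<noteq> 0\<close> by force
    then show ?thesis
      by (simp add: in_keys_iff)
  qed
  then have others: "(\<Sum>l\<in>{1..m} - {j}. (of_nat (lookup b l) + 1) * lookup g (b + single l 1)) = 0"
    by simp
  have "lookup (Kminus m g) b = (\<Sum>l=1..m. (of_nat (lookup b l) + 1) * lookup g (b + single l 1))"
    by (simp add: Kminus_def lookup_sum lookup_pderiv_var)
  also have "\<dots> = (of_nat (lookup b j) + 1) * lookup g (b + single j 1)
      + (\<Sum>l\<in>{1..m} - {j}. (of_nat (lookup b l) + 1) * lookup g (b + single l 1))"
    by (rule sum.remove[OF finite_atLeastAtMost j])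
  also have "\<dots> = (of_nat (lookup b j) + 1) * lookup g a"
    by (simp only: others b(1) add_0_right)
  also have "\<dots> \<noteq> 0"
    using a by (simp add: in_keys_iff add_pos_nonneg)
  finally show False
    using K by simp
qed

lemma CK_zero_var_harm:
  assumes "h \<in> harm (Suc m) d"
  shows "CK (Suc m) (zero_var (Suc m) h) = h"
proof -
  have h: "h \<in> hom_polys (Suc m) d" "Kminus (Suc m) h = 0"
    using assms by (auto simp: harm_def)
  let ?g = "h - CK (Suc m) (zero_var (Suc m) h)"
  have K: "Kminus (Suc m) ?g = 0"
    by (simp add: Kminus.diff h(2) Kminus_CK[OF hom_polys_zero_var[OF h(1)]])
  have "zero_var (Suc m) ?g = zero_var (Suc m) h - zero_var (Suc m) (CK (Suc m) (zero_var (Suc m) h))"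
    by (simp only: zero_var_def psubst.diff)
  then have Z: "zero_var (Suc m) ?g = 0"
    by (simp only: zero_var_CK[OF hom_polys_zero_var[OF h(1)]] diff_self)
  have "?g = 0"
    by (rule Kminus_zero_var_eq_0_imp_eq_0[OF _ K Z]) simp
  then show ?thesis
    by simp
qed

lemma CK_eq_0_imp_eq_0:
  assumes "p \<in> hom_polys m d" "CK (Suc m) p = 0"
  shows "p = 0"
  using zero_var_CK[OF assms(1)] assms(2) by (simp add: zero_var_def psubst.zero)

lemma CK_sum: "CK (Suc m) (sum f I) = (\<Sum>i\<in>I. CK (Suc m) (f i))"
  by (simp add: CK_Suc psubst.sum)

lemma CK_pconst_mult: "CK (Suc m) (pconst c * p) = pconst c * CK (Suc m) p"
  by (simp add: CK_Suc psubst_pconst_mult)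

text \<open>Coefficient functions on a finite index set are easier to push through CK and the
  Fischer decomposition than the set-based span and independence of the module library.\<close>
definition indexed_basis :: "('i \<Rightarrow> rpoly) \<Rightarrow> 'i set \<Rightarrow> rpoly set \<Rightarrow> bool" where
  "indexed_basis f I V \<longleftrightarrow> finite I \<and> f ` I \<subseteq> V
     \<and> (\<forall>c. (\<Sum>i\<in>I. pconst (c i) * f i) = 0 \<longrightarrow> (\<forall>i\<in>I. c i = 0))
     \<and> (\<forall>p\<in>V. \<exists>c. p = (\<Sum>i\<in>I. pconst (c i) * f i))"

lemma indexed_basisI:
  assumes "finite I" "\<And>i. i \<in> I \<Longrightarrow> f i \<in> V"
    and "\<And>c. (\<Sum>i\<in>I. pconst (c i) * f i) = 0 \<Longrightarrow> \<forall>i\<in>I. c i = 0"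
    and "\<And>p. p \<in> V \<Longrightarrow> \<exists>c. p = (\<Sum>i\<in>I. pconst (c i) * f i)"
  shows "indexed_basis f I V"
  using assms by (auto simp: indexed_basis_def)

lemma
  assumes "indexed_basis f I V"
  shows indexed_basis_finite: "finite I"
    and indexed_basis_mem: "i \<in> I \<Longrightarrow> f i \<in> V"
    and indexed_basis_coeffs_eq_0: "(\<Sum>i\<in>I. pconst (c i) * f i) = 0 \<Longrightarrow> i \<in> I \<Longrightarrow> c i = 0"
    and indexed_basis_spans: "p \<in> V \<Longrightarrow> \<exists>c. p = (\<Sum>i\<in>I. pconst (c i) * f i)"
  using assms by (auto simp: indexed_basis_def)

lemma indexed_basis_singleton:
  assumes "p \<noteq> 0" "p \<in> V" "\<And>q. q \<in> V \<Longrightarrow> \<exists>c. q = pconst c * p"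
  shows "indexed_basis (\<lambda>_. p) {i} V"
proof (rule indexed_basisI)
  show "\<exists>c. q = (\<Sum>i\<in>{i}. pconst (c i) * p)" if "q \<in> V" for q
    using assms(3)[OF that] by auto
qed (use assms in auto)

lemma indexed_basis_reindex:
  assumes basis: "indexed_basis h J V" and inj: "inj_on g J" and eq: "\<And>x. x \<in> J \<Longrightarrow> f (g x) = h x"
  shows "indexed_basis f (g ` J) V"
proof -
  have sum_eq: "(\<Sum>i\<in>g ` J. pconst (c i) * f i) = (\<Sum>x\<in>J. pconst (c (g x)) * h x)" for c
    by (simp add: sum.reindex[OF inj] eq)
  show ?thesis
  proof (rule indexed_basisI)
    show "finite (g ` J)"
      using indexed_basis_finite[OF basis] by simp
    show "f i \<in> V" if "i \<in> g ` J" for i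
      using that eq indexed_basis_mem[OF basis] by auto
    show "\<forall>i\<in>g ` J. c i = 0" if "(\<Sum>i\<in>g ` J. pconst (c i) * f i) = 0" for c
      using that indexed_basis_coeffs_eq_0[OF basis] by (auto simp: sum_eq)
    show "\<exists>c. p = (\<Sum>i\<in>g ` J. pconst (c i) * f i)" if p: "p \<in> V" for p
    proof -
      obtain d where "p = (\<Sum>x\<in>J. pconst (d x) * h x)"
        using indexed_basis_spans[OF basis p] by blast
      then have "p = (\<Sum>i\<in>g ` J. pconst (d (the_inv_into J g i)) * f i)"
        by (simp add: sum_eq the_inv_into_f_f[OF inj])
      then show ?thesis
        by (rule exI[of _ "\<lambda>i. d (the_inv_into J g i)"])
    qed
  qed
qed

lemma indexed_basis_cong:
  assumes "indexed_basis f I V" "\<And>i. i \<in> I \<Longrightarrow> g i = f i"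
  shows "indexed_basis g I V"
  using indexed_basis_reindex[OF assms(1), of id g] assms(2) by simp

lemma indexed_basis_CK:
  assumes basis: "indexed_basis f I (hom_polys m d)"
  shows "indexed_basis (\<lambda>i. CK (Suc m) (f i)) I (harm (Suc m) d)"
proof (rule indexed_basisI)
  have hom: "(\<Sum>i\<in>I. pconst (c i) * f i) \<in> hom_polys m d" for c
    using indexed_basis_mem[OF basis] by (intro hom_polys_sum hom_polys_pconst_mult)
  have CK_comb: "CK (Suc m) (\<Sum>i\<in>I. pconst (c i) * f i) = (\<Sum>i\<in>I. pconst (c i) * CK (Suc m) (f i))" for c
    by (simp add: CK_sum CK_pconst_mult)
  show "finite I"
    using indexed_basis_finite[OF basis] .
  show "CK (Suc m) (f i) \<in> harm (Suc m) d" if "i \<in> I" for i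
    using indexed_basis_mem[OF basis that] by (rule CK_harm)
  show "\<forall>i\<in>I. c i = 0" if "(\<Sum>i\<in>I. pconst (c i) * CK (Suc m) (f i)) = 0" for c
    using that CK_eq_0_imp_eq_0[OF hom] indexed_basis_coeffs_eq_0[OF basis] by (simp add: flip: CK_comb)
  show "\<exists>c. h = (\<Sum>i\<in>I. pconst (c i) * CK (Suc m) (f i))" if "h \<in> harm (Suc m) d" for h
  proof -
    have "zero_var (Suc m) h \<in> hom_polys m d"
      using that by (intro hom_polys_zero_var) (simp add: harm_def)
    then obtain c where "zero_var (Suc m) h = (\<Sum>i\<in>I. pconst (c i) * f i)"
      using indexed_basis_spans[OF basis] by blast
    then have "h = (\<Sum>i\<in>I. pconst (c i) * CK (Suc m) (f i))"
      using CK_zero_var_harm[OF that] by (simp add: CK_comb)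
    then show ?thesis by blast
  qed
qed

lemma sum_Sigma_Kplus_pow:
  assumes "\<And>j. j \<le> k \<Longrightarrow> finite (I j)"
  shows "(\<Sum>j\<le>k. (Kplus \<nu> m ^^ j) (\<Sum>i\<in>I j. pconst (c (j, i)) * f j i))
    = (\<Sum>x\<in>(SIGMA j:{..k}. I j). pconst (c x) * (case x of (j, i) \<Rightarrow> (Kplus \<nu> m ^^ j) (f j i)))"
proof -
  have "(\<Sum>j\<le>k. (Kplus \<nu> m ^^ j) (\<Sum>i\<in>I j. pconst (c (j, i)) * f j i))
      = (\<Sum>j\<le>k. \<Sum>i\<in>I j. pconst (c (j, i)) * (Kplus \<nu> m ^^ j) (f j i))"
    by (simp add: Kplus_pow.sum Kplus_pow_pconst_mult)
  also have "\<dots> = (\<Sum>(j, i)\<in>(SIGMA j:{..k}. I j). pconst (c (j, i)) * (Kplus \<nu> m ^^ j) (f j i))"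
    using assms by (intro sum.Sigma) auto
  finally show ?thesis
    by (simp add: case_prod_beta')
qed

lemma indexed_basis_fischer:
  assumes pos: "(\<Sum>l=1..m. \<nu> l) > 0"
    and bases: "\<And>j. j \<le> k \<Longrightarrow> indexed_basis (f j) (I j) (harm m (k - j))"
  shows "indexed_basis (\<lambda>(j, i). (Kplus \<nu> m ^^ j) (f j i)) (SIGMA j:{..k}. I j) (hom_polys m k)"
proof (rule indexed_basisI)
  let ?comb = "\<lambda>c j. \<Sum>i\<in>I j. pconst (c (j, i)) * f j i"
  have fin: "finite (I j)" if "j \<le> k" for j
    using indexed_basis_finite[OF bases[OF that]] .
  have harm_comb: "?comb c j \<in> harm m (k - j)" if "j \<le> k" for c j
    using indexed_basis_mem[OF bases[OF that]] by (intro harm_sum harm_pconst_mult)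
  note sum_Sigma = sum_Sigma_Kplus_pow[where \<nu> = \<nu> and m = m and f = f, OF fin]
  show "finite (SIGMA j:{..k}. I j)"
    using fin by auto
  show "(case x of (j, i) \<Rightarrow> (Kplus \<nu> m ^^ j) (f j i)) \<in> hom_polys m k"
    if x: "x \<in> (SIGMA j:{..k}. I j)" for x
  proof -
    from x obtain j i where x: "x = (j, i)" "j \<le> k" "i \<in> I j"
      by auto
    have "(Kplus \<nu> m ^^ j) (f j i) \<in> hom_polys m (k - j + j)"
      using indexed_basis_mem[OF bases x(3)] x(2) by (intro hom_polys_Kplus_pow) (simp add: harm_def)
    with x show ?thesis
      by simp
  qed
  show "\<forall>x\<in>(SIGMA j:{..k}. I j). c x = 0"
    if "(\<Sum>x\<in>(SIGMA j:{..k}. I j). pconst (c x) * (case x of (j, i) \<Rightarrow> (Kplus \<nu> m ^^ j) (f j i))) = 0" for c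
  proof -
    have "\<forall>j\<le>k. ?comb c j = 0"
      using that harm_comb by (intro fischer_unique[OF pos, where e = "\<lambda>j. k - j"]) (simp_all flip: sum_Sigma)
    then show ?thesis
      using indexed_basis_coeffs_eq_0[OF bases, where c = "\<lambda>i. c (_, i)"] by auto
  qed
  show "\<exists>c. p = (\<Sum>x\<in>(SIGMA j:{..k}. I j). pconst (c x) * (case x of (j, i) \<Rightarrow> (Kplus \<nu> m ^^ j) (f j i)))"
    if hom: "p \<in> hom_polys m k" for p
  proof -
    obtain h where h: "\<forall>j\<le>k. h j \<in> harm m (k - j)" and p: "p = (\<Sum>j\<le>k. (Kplus \<nu> m ^^ j) (h j))"
      using fischer_exists[OF pos hom] by blast
    have "\<forall>j. \<exists>cj. j \<le> k \<longrightarrow> h j = (\<Sum>i\<in>I j. pconst (cj i) * f j i)"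
      using h indexed_basis_spans[OF bases] by blast
    then obtain C where "\<And>j. j \<le> k \<Longrightarrow> h j = (\<Sum>i\<in>I j. pconst (C j i) * f j i)"
      by metis
    then have "p = (\<Sum>j\<le>k. (Kplus \<nu> m ^^ j) (?comb (case_prod C) j))"
      by (simp add: p)
    then have "p = (\<Sum>x\<in>(SIGMA j:{..k}. I j). pconst (case_prod C x) * (case x of (j, i) \<Rightarrow> (Kplus \<nu> m ^^ j) (f j i)))"
      by (simp only: sum_Sigma[where c = "case_prod C"])
    then show ?thesis by blast
  qed
qed

interpretation M: module pscale
  by standard (simp_all add: pscale_eq_pconst_mult pconst_add pconst_mult algebra_simps)

lemma subspace_harm: "M.subspace (harm m d)"
  by (rule M.subspaceI) (simp_all add: pscale_eq_pconst_mult harm_add harm_pconst_mult)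

lemma indexed_basis_inj_on:
  assumes basis: "indexed_basis f I V"
  shows "inj_on f I"
proof (rule inj_onI)
  fix a b assume ab: "a \<in> I" "b \<in> I" "f a = f b"
  have delta: "(\<Sum>i\<in>I. pconst (if i = x then 1 else 0) * f i) = f x" if "x \<in> I" for x
  proof -
    have "(\<Sum>i\<in>I. pconst (if i = x then 1 else 0) * f i) = (\<Sum>i\<in>I. if i = x then f i else 0)"
      by (intro sum.cong) auto
    with that indexed_basis_finite[OF basis] show ?thesis
      by simp
  qed
  let ?c = "\<lambda>i. (if i = a then 1 else 0) - (if i = b then 1 else 0 :: real)"
  have "(\<Sum>i\<in>I. pconst (?c i) * f i) = 0"
    using ab by (simp add: pconst_diff left_diff_distrib sum_subtractf delta)
  from indexed_basis_coeffs_eq_0[OF basis this \<open>a \<in> I\<close>] show "a = b"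
    by (simp split: if_splits)
qed

lemma indexed_basis_independent:
  assumes basis: "indexed_basis f I V"
  shows "\<not> M.dependent (f ` I)"
proof
  assume "M.dependent (f ` I)"
  then obtain t u v where t: "finite t" "t \<subseteq> f ` I" "(\<Sum>v\<in>t. pscale (u v) v) = 0"
    and v: "v \<in> t" "u v \<noteq> 0"
    unfolding M.dependent_explicit by blast
  define S where "S = {i\<in>I. f i \<in> t}"
  define c where "c i = (if f i \<in> t then u (f i) else 0)" for i
  have "(\<Sum>i\<in>I. pconst (c i) * f i) = (\<Sum>i\<in>S. pconst (u (f i)) * f i)"
    using indexed_basis_finite[OF basis]
    by (intro sum.mono_neutral_cong_right) (auto simp: S_def c_def)
  also have "\<dots> = (\<Sum>v\<in>f ` S. pconst (u v) * v)"
    using inj_on_subset[OF indexed_basis_inj_on[OF basis]]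
    by (intro sum.reindex[symmetric, unfolded comp_def]) (auto simp: S_def)
  also have "f ` S = t"
    using t(2) by (auto simp: S_def)
  finally have c0: "\<forall>i\<in>I. c i = 0"
    using t(3) indexed_basis_coeffs_eq_0[OF basis] by (simp add: pscale_eq_pconst_mult)
  obtain i where i: "i \<in> I" "v = f i"
    using t(2) v(1) by blast
  then have "c i = u v"
    using v(1) by (simp add: c_def)
  with c0 i(1) v(2) show False
    by simp
qed

lemma indexed_basis_span:
  assumes basis: "indexed_basis f I V" and "M.subspace V"
  shows "M.span (f ` I) = V"
proof
  show "M.span (f ` I) \<subseteq> V"
    using assms indexed_basis_mem[OF basis] by (intro M.span_minimal) auto
  show "V \<subseteq> M.span (f ` I)"
  proof
    fix p assume "p \<in> V"
    then obtain c where "p = (\<Sum>i\<in>I. pscale (c i) (f i))"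
      using indexed_basis_spans[OF basis] by (auto simp: pscale_eq_pconst_mult)
    also have "\<dots> \<in> M.span (f ` I)"
      by (intro M.span_sum M.span_scale M.span_base) auto
    finally show "p \<in> M.span (f ` I)" .
  qed
qed

section \<open>The basis of harmonic polynomials\<close>

definition weak_compositions :: "nat \<Rightarrow> nat \<Rightarrow> nat list set" where
  "weak_compositions m k = {js. length js = m \<and> sum_list js = k}"

lemma weak_compositions_1: "weak_compositions (Suc 0) k = {[k]}"
  by (auto simp: weak_compositions_def length_Suc_conv)

lemma weak_compositions_Suc:
  "weak_compositions (Suc m) k
    = (\<lambda>(j, js). js @ [j]) ` (SIGMA j:{..k}. weak_compositions m (k - j))"
proof
  show "weak_compositions (Suc m) k \<subseteq> (\<lambda>(j, js). js @ [j]) ` (SIGMA j:{..k}. weak_compositions m (k - j))"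
  proof
    fix t assume t: "t \<in> weak_compositions (Suc m) k"
    then have "t \<noteq> []"
      by (auto simp: weak_compositions_def)
    then have t_eq: "t = butlast t @ [last t]"
      by simp
    have "sum_list t = sum_list (butlast t) + last t"
      by (subst t_eq) simp
    with t have "last t \<le> k" "butlast t \<in> weak_compositions m (k - last t)"
      by (auto simp: weak_compositions_def)
    with t_eq show "t \<in> (\<lambda>(j, js). js @ [j]) ` (SIGMA j:{..k}. weak_compositions m (k - j))"
      by (intro image_eqI[of _ _ "(last t, butlast t)"]) auto
  qed
next
  show "(\<lambda>(j, js). js @ [j]) ` (SIGMA j:{..k}. weak_compositions m (k - j)) \<subseteq> weak_compositions (Suc m) k"
    by (auto simp: weak_compositions_def)
qed

lemma stage_snoc:
  assumes "length js = Suc r"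
  shows "stage \<nu> (js @ [j]) (Suc r) = (Kplus \<nu> (Suc (Suc r)) ^^ j) (CK (Suc (Suc r)) (stage \<nu> js r))"
proof -
  have "stage \<nu> (js @ ys) r' = stage \<nu> js r'" if "r' \<le> r" for ys r'
    using that assms by (induction r') (simp_all add: nth_append)
  with assms show ?thesis
    by (simp add: nth_append)
qed

lemma indexed_basis_hom_polys_Suc_0: "indexed_basis (\<lambda>_. pvar 1 ^ k) {i} (hom_polys (Suc 0) k)"
proof (rule indexed_basis_singleton)
  show "pvar 1 ^ k \<noteq> 0"
    by (metis pvar_power lookup_single_eq lookup_zero one_neq_zero)
  show "pvar 1 ^ k \<in> hom_polys (Suc 0) k"
    using hom_polys_power[OF hom_polys_pvar[of 1 1], of k] by simp
qed (use hom_polys_Suc_0_eq in blast)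

lemma indexed_basis_stage:
  assumes "\<And>M. 1 \<le> M \<Longrightarrow> M \<le> Suc m \<Longrightarrow> (\<Sum>l=1..M. \<nu> l) > 0"
  shows "indexed_basis (\<lambda>js. stage \<nu> js m) (weak_compositions (Suc m) k) (hom_polys (Suc m) k)"
  using assms
proof (induction m arbitrary: k)
  case 0
  show ?case
    unfolding weak_compositions_1
    by (rule indexed_basis_cong[OF indexed_basis_hom_polys_Suc_0]) simp
next
  case (Suc m)
  let ?M = "Suc (Suc m)"
  have "indexed_basis (\<lambda>js. CK ?M (stage \<nu> js m)) (weak_compositions (Suc m) k') (harm ?M k')" for k'
    using Suc by (intro indexed_basis_CK Suc.IH) auto
  then have "indexed_basis (\<lambda>(j, js). (Kplus \<nu> ?M ^^ j) (CK ?M (stage \<nu> js m)))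
      (SIGMA j:{..k}. weak_compositions (Suc m) (k - j)) (hom_polys ?M k)"
    using Suc.prems[of ?M] by (intro indexed_basis_fischer) auto
  then show ?case
    unfolding weak_compositions_Suc[of "Suc m"]
    by (rule indexed_basis_reindex)
      (auto simp: inj_on_def weak_compositions_def stage_snoc simp del: stage.simps)
qed

theorem theorem3p3:
  fixes n k :: nat and \<nu> :: "nat \<Rightarrow> real"
  assumes "n \<ge> 2"
    and "\<And>j. 1 \<le> j \<Longrightarrow> j \<le> n \<Longrightarrow> \<nu> j > 0"
  defines "T \<equiv> {js :: nat list. length js = n - 1 \<and> sum_list js = k}"
  shows "inj_on (psi \<nu> n) T
    \<and> \<not> module.dependent pscale (psi \<nu> n ` T)
    \<and> module.span pscale (psi \<nu> n ` T) = harm n k"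
proof -
  obtain m where n: "n = Suc (Suc m)"
    using assms(1) by (metis add_2_eq_Suc le_Suc_ex)
  have "(\<Sum>l=1..M. \<nu> l) > 0" if "1 \<le> M" "M \<le> Suc m" for M
    using that assms(2) n by (intro sum_pos) auto
  then have "indexed_basis (\<lambda>js. stage \<nu> js m) T (hom_polys (Suc m) k)"
    unfolding T_def n by (simp add: indexed_basis_stage flip: weak_compositions_def)
  then have basis: "indexed_basis (psi \<nu> n) T (harm n k)"
    unfolding psi_def n by (simp add: indexed_basis_CK)
  show ?thesis
    using indexed_basis_inj_on[OF basis] indexed_basis_independent[OF basis]
      indexed_basis_span[OF basis subspace_harm] by blast
qed

end
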